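(* Let $m\in\mathbb{N}$ and let $G$ be a bipartite graph with parts $X$ and $Y$, where $Y\neq\emptyset$, such that $|X|\geq |Y|+2m$ and every vertex in $Y$ has degree at least $|X|-m$. Then $G$ contains a collection of at most $\lfloor |X|/|Y|\rfloor$ paths whose union covers all vertices of $Y$ and all but $|Y|+2m$ vertices of $X$.
   Context: Paths may have length zero and need not be vertex-disjoint. *)

theory Defs
  imports Main
begin

definition bipartite_graph :: "'a set \<Rightarrow> 'a set \<Rightarrow> ('a \<Rightarrow> 'a \<Rightarrow> bool) \<Rightarrow> bool" where
  "bipartite_graph X Y E \<longleftrightarrow> finite X \<and> finite Y \<and> X \<inter> Y = {} \<and>
     (\<forall>u v. E u v \<longrightarrow> E v u) \<and>
     (\<forall>u v. E u v \<longrightarrow> (u \<in> X \<and> v \<in> Y) \<or> (u \<in> Y \<and> v \<in> X))"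

definition degree :: "'a set \<Rightarrow> ('a \<Rightarrow> 'a \<Rightarrow> bool) \<Rightarrow> 'a \<Rightarrow> nat" where
  "degree V E v = card {u \<in> V. E v u}"

definition is_path :: "'a set \<Rightarrow> ('a \<Rightarrow> 'a \<Rightarrow> bool) \<Rightarrow> 'a list \<Rightarrow> bool" where
  "is_path V E p \<longleftrightarrow> p \<noteq> [] \<and> distinct p \<and> set p \<subseteq> V \<and>
     (\<forall>i. Suc i < length p \<longrightarrow> E (p ! i) (p ! Suc i))"

end

theory Submission
  imports Defs
begin

text \<open>Any two vertices of \<open>Y\<close> miss at most \<open>m\<close> vertices of \<open>X\<close> each, so they have at
least \<open>|X| - 2m\<close> common neighbours. Hence a path \<open>x\<^sub>1 y\<^sub>1 x\<^sub>2 y\<^sub>2 \<dots> x\<^sub>k y\<^sub>k\<close> through all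
\<open>k = |Y|\<close> vertices of \<open>Y\<close> can be grown greedily, each \<open>x\<^sub>i\<close> a common neighbour of its two
neighbours on the path, and as long as fewer than \<open>|X| - 2m\<close> vertices of \<open>X\<close> are covered so far,
\<open>x\<^sub>i\<close> can be taken outside everything covered so far. Repeating this \<open>\<lfloor>|X|/|Y|\<rfloor>\<close> times covers
at least \<open>min (\<lfloor>|X|/|Y|\<rfloor> |Y|) (|X| - 2m)\<close> vertices of \<open>X\<close>, leaving at most
\<open>max (|X| mod |Y|) 2m \<le> |Y| + 2m\<close> uncovered.\<close>

lemma is_path_Cons:
  assumes "is_path V E q" "v \<in> V" "v \<notin> set q" "E v (hd q)"
  shows "is_path V E (v # q)"
  using assms unfolding is_path_def
  by (auto simp: nth_Cons hd_conv_nth split: nat.split)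

lemma card_Int_lower_bound:
  assumes "finite X" "A \<subseteq> X" "B \<subseteq> X"
  shows "card A + card B \<le> card X + card (A \<inter> B)"
proof -
  have "card A + card B = card (A \<union> B) + card (A \<inter> B)"
    using assms by (intro card_Un_Int) (auto intro: finite_subset)
  moreover have "card (A \<union> B) \<le> card X"
    using assms by (intro card_mono) auto
  ultimately show ?thesis by linarith
qed

lemma ex_fresh_min_card_insert:
  assumes S: "finite S" "Q \<subseteq> S" and "card Q < n" "n \<le> card C"
  shows "\<exists>x \<in> C - Q. min (card S + 1) n \<le> card (insert x S)"
proof (cases "C \<subseteq> S")
  case True
  have "\<not> C \<subseteq> Q"
  proof
    assume "C \<subseteq> Q"
    then have "card C \<le> card Q" using finite_subset[OF S(2,1)] by (rule card_mono[rotated])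
    then show False using assms(3,4) by linarith
  qed
  then obtain x where x: "x \<in> C - Q" by blast
  have "min (card S + 1) n \<le> card S" using card_mono[OF S(1) True] assms(4) by linarith
  also have "\<dots> \<le> card (insert x S)" by (rule card_insert_le)
  finally show ?thesis using x by blast
next
  case False
  then obtain x where x: "x \<in> C" "x \<notin> S" by blast
  then have "card (insert x S) = card S + 1" using S(1) by simp
  moreover have "x \<in> C - Q" using x S(2) by blast
  ultimately show ?thesis by (intro bexI[of _ x]) simp_all
qed

lemma degree_in_part:
  assumes "bipartite_graph X Y E" "y \<in> Y"
  shows "degree (X \<union> Y) E y = card {x \<in> X. E y x}"
proof -
  have "{u \<in> X \<union> Y. E y u} = {x \<in> X. E y x}"
    using assms unfolding bipartite_graph_def by blast
  then show ?thesis unfolding degree_def by simp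
qed

lemma card_common_neighbours_ge:
  assumes bg: "bipartite_graph X Y E"
    and deg: "\<forall>y\<in>Y. degree (X \<union> Y) E y \<ge> card X - m"
    and "y \<in> Y" "w \<in> Y"
  shows "card X - 2 * m \<le> card {x \<in> X. E y x \<and> E w x}"
proof -
  have "finite X" using bg unfolding bipartite_graph_def by simp
  then have "card {x \<in> X. E y x} + card {x \<in> X. E w x}
      \<le> card X + card ({x \<in> X. E y x} \<inter> {x \<in> X. E w x})"
    by (rule card_Int_lower_bound) auto
  also have "{x \<in> X. E y x} \<inter> {x \<in> X. E w x} = {x \<in> X. E y x \<and> E w x}" by blast
  finally have "card {x \<in> X. E y x} + card {x \<in> X. E w x}
      \<le> card X + card {x \<in> X. E y x \<and> E w x}" .
  moreover have "card X - m \<le> card {x \<in> X. E y x}" "card X - m \<le> card {x \<in> X. E w x}"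
    using deg assms(3,4) degree_in_part[OF bg] by auto
  ultimately show ?thesis by linarith
qed

text \<open>From here on \<open>n\<close> is any lower bound on the number of common neighbours of two vertices
of \<open>Y\<close>; the theorem uses \<open>n = |X| - 2m\<close>.\<close>

lemma extend_path:
  assumes bg: "bipartite_graph X Y E"
    and common: "\<forall>y\<in>Y. \<forall>w\<in>Y. n \<le> card {x \<in> X. E y x \<and> E w x}"
    and q: "is_path (X \<union> Y) E q" "hd q \<in> Y" "card (set q \<inter> X) < n"
    and w: "w \<in> Y"
    and S: "finite S" "set q \<inter> X \<subseteq> S"
  shows "\<exists>x \<in> X. E w x \<and> is_path (X \<union> Y) E (x # q) \<and> min (card S + 1) n \<le> card (insert x S)"
proof -
  obtain x where x: "x \<in> {x \<in> X. E (hd q) x \<and> E w x} - set q \<inter> X"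
      and card: "min (card S + 1) n \<le> card (insert x S)"
    using ex_fresh_min_card_insert[OF S q(3)] common q(2) w by blast
  have "E x (hd q)" using x bg unfolding bipartite_graph_def by blast
  then have "is_path (X \<union> Y) E (x # q)" using x by (intro is_path_Cons[OF q(1)]) auto
  then show ?thesis using x card by blast
qed

text \<open>The condition on \<open>hd p\<close> is what lets the induction step prepend the next vertex of \<open>ys\<close>.\<close>

lemma ex_path_through:
  assumes bg: "bipartite_graph X Y E"
    and common: "\<forall>y\<in>Y. \<forall>w\<in>Y. n \<le> card {x \<in> X. E y x \<and> E w x}"
  shows "\<lbrakk>ys \<noteq> []; distinct ys; set ys \<subseteq> Y; length ys \<le> n; w \<in> Y; finite F\<rbrakk> \<Longrightarrow>
    \<exists>p. is_path (X \<union> Y) E p \<and> hd p \<in> X \<and> E w (hd p) \<and>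
      set ys \<subseteq> set p \<and> set p \<subseteq> X \<union> set ys \<and> card (set p \<inter> X) \<le> length ys \<and>
      min (card F + length ys) n \<le> card (F \<union> set p \<inter> X)"
proof (induction ys arbitrary: w rule: list_nonempty_induct)
  case (single y)
  have "is_path (X \<union> Y) E [y]" using single unfolding is_path_def by simp
  moreover have "y \<notin> X" using single bg unfolding bipartite_graph_def by auto
  ultimately obtain x where "x \<in> X" "E w x" "is_path (X \<union> Y) E [x, y]"
      "min (card F + 1) n \<le> card (insert x F)"
    using extend_path[OF bg common, of "[y]" w F] single by auto
  with \<open>y \<notin> X\<close> show ?case by (intro exI[of _ "[x, y]"]) (auto simp: insert_commute)
next
  case (cons y ys)
  obtain p where p: "is_path (X \<union> Y) E p" "hd p \<in> X" "E y (hd p)" "set ys \<subseteq> set p"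
      "set p \<subseteq> X \<union> set ys" "card (set p \<inter> X) \<le> length ys"
      "min (card F + length ys) n \<le> card (F \<union> set p \<inter> X)"
    using cons.IH[of y] cons.prems by auto
  have disj: "X \<inter> Y = {}" using bg unfolding bipartite_graph_def by simp
  have "y \<notin> set p" using p(5) cons.prems disj by auto
  then have yp: "is_path (X \<union> Y) E (y # p)" using cons.prems p by (intro is_path_Cons) auto
  have yX: "set (y # p) \<inter> X = set p \<inter> X" using cons.prems disj by auto
  obtain x where x: "x \<in> X" "E w x" "is_path (X \<union> Y) E (x # y # p)"
      "min (card (F \<union> set p \<inter> X) + 1) n \<le> card (insert x (F \<union> set p \<inter> X))"
    using extend_path[OF bg common yp, of w "F \<union> set p \<inter> X"] cons.prems p(6) yX by auto
  show ?case
  proof (intro exI[of _ "x # y # p"] conjI)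
    show "card (set (x # y # p) \<inter> X) \<le> length (y # ys)"
      using p(6) yX x(1) by (simp add: card_insert_le_m1)
    show "min (card F + length (y # ys)) n \<le> card (F \<union> set (x # y # p) \<inter> X)"
      using p(7) x(1,4) yX by auto
  qed (use x p in auto)
qed

lemma ex_paths_covering:
  assumes bg: "bipartite_graph X Y E"
    and common: "\<forall>y\<in>Y. \<forall>w\<in>Y. n \<le> card {x \<in> X. E y x \<and> E w x}"
    and "Y \<noteq> {}" "card Y \<le> n"
  shows "\<exists>P. length P = j \<and> (\<forall>p \<in> set P. is_path (X \<union> Y) E p \<and> Y \<subseteq> set p) \<and>
    min (j * card Y) n \<le> card (X \<inter> (\<Union>p \<in> set P. set p))"
proof (induction j)
  case 0
  show ?case by (intro exI[of _ "[]"]) simp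
next
  case (Suc j)
  then obtain P where P: "length P = j" "\<forall>p \<in> set P. is_path (X \<union> Y) E p \<and> Y \<subseteq> set p"
      "min (j * card Y) n \<le> card (X \<inter> (\<Union>p \<in> set P. set p))"
    by blast
  define F where "F = X \<inter> (\<Union>p \<in> set P. set p)"
  have "finite X" "finite Y" using bg unfolding bipartite_graph_def by auto
  then obtain ys where ys: "set ys = Y" "distinct ys" using finite_distinct_list by blast
  have "length ys = card Y" using ys by (metis distinct_card)
  have "ys \<noteq> []" using ys \<open>Y \<noteq> {}\<close> by auto
  then have "hd ys \<in> Y" using ys(1) by auto
  have "finite F" using \<open>finite X\<close> unfolding F_def by simp
  obtain p where p: "is_path (X \<union> Y) E p" "Y \<subseteq> set p"
      "min (card F + card Y) n \<le> card (F \<union> set p \<inter> X)"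
    using ex_path_through[OF bg common \<open>ys \<noteq> []\<close> ys(2) _ _ \<open>hd ys \<in> Y\<close> \<open>finite F\<close>]
      ys(1) \<open>length ys = card Y\<close> \<open>card Y \<le> n\<close> by auto
  have "X \<inter> (\<Union>q \<in> set (p # P). set q) = F \<union> set p \<inter> X" unfolding F_def by auto
  moreover have "min (Suc j * card Y) n \<le> min (card F + card Y) n"
    using P(3) unfolding F_def by (auto simp: min_def split: if_splits)
  ultimately show ?case using P p by (intro exI[of _ "p # P"]) auto
qed

theorem lemma2p3:
  fixes X Y :: "'a set" and E :: "'a \<Rightarrow> 'a \<Rightarrow> bool" and m :: nat
  assumes "bipartite_graph X Y E"
    and "Y \<noteq> {}"
    and "card X \<ge> card Y + 2 * m"
    and "\<forall>y\<in>Y. degree (X \<union> Y) E y \<ge> card X - m"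
  shows "\<exists>P :: 'a list list. length P \<le> card X div card Y \<and>
           (\<forall>p \<in> set P. is_path (X \<union> Y) E p) \<and>
           Y \<subseteq> (\<Union>p \<in> set P. set p) \<and>
           card (X - (\<Union>p \<in> set P. set p)) \<le> card Y + 2 * m"
proof -
  define t where "t = card X div card Y"
  have "finite X" "finite Y" using assms(1) unfolding bipartite_graph_def by auto
  then have "0 < card Y" "0 < t" using assms(2,3) by (auto simp: t_def div_greater_zero_iff)
  have common: "\<forall>y\<in>Y. \<forall>w\<in>Y. card X - 2 * m \<le> card {x \<in> X. E y x \<and> E w x}"
    using card_common_neighbours_ge[OF assms(1,4)] by blast
  have "card Y \<le> card X - 2 * m" using assms(3) by linarith
  then obtain P where P: "length P = t" "\<forall>p \<in> set P. is_path (X \<union> Y) E p \<and> Y \<subseteq> set p"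
      "min (t * card Y) (card X - 2 * m) \<le> card (X \<inter> (\<Union>p \<in> set P. set p))"
    using ex_paths_covering[OF assms(1) common assms(2)] by blast
  have "Y \<subseteq> (\<Union>p \<in> set P. set p)" using P(1,2) \<open>0 < t\<close> by (cases P) auto
  moreover have "card (X - (\<Union>p \<in> set P. set p)) = card X - card (X \<inter> (\<Union>p \<in> set P. set p))"
    using \<open>finite X\<close> by (simp add: card_Diff_subset_Int)
  moreover have "card X = t * card Y + card X mod card Y" "card X mod card Y < card Y"
    using \<open>0 < card Y\<close> by (simp_all add: t_def)
  ultimately show ?thesis using P by (intro exI[of _ P]) (auto simp: t_def[symmetric])
qed

end
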